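(* Let $T$ be a positive integer, $f:\mathbb{R}^{T}\to\mathbb{R}$ differentiable with $\mathrm{prog}(\nabla f(x))\le\mathrm{prog}(x)+1$ for all $x$, $0<\tau_1\le\dots\le\tau_n$, $p\in(0,1]$, and let the oracle be $O=O^G_{\tau_1,\dots,\tau_n}$ with $\mathcal{D}=\mathrm{Bernoulli}(p)^{\otimes n}$ and $$[G(x;\xi)]_j=\nabla_jf(x)\Big(1+\mathbb{1}[j>\mathrm{prog}(x)]\Big(\frac\xi p-1\Big)\Big),\quad \xi\in\{0,1\},\ j\in[T].$$ Let $A$ be a zero-respecting algorithm run in the time oracle protocol with this oracle. Then for every $\delta\in(0,1]$ and every $t\ge0$ with $$t\le\frac12\min_{m\in[n]}\tau_m\Big(1+\frac1{4pm}\Big)\Big(\frac T2+\log\delta\Big),$$ with probability at least $1-\delta$ we have $\mathrm{prog}(x^k)<T$ for all $k\in S_t$.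
   Context: $\mathrm{prog}(x)=\max\{i\ge0:x_i\ne0\}$ with convention $x_0\equiv1$; $\mathrm{supp}(x)=\{i:x_i\ne0\}$; $\mathbb{N}_0=\{0,1,\dots\}$. Time oracle protocol (single oracle). An algorithm is $A^0\in\mathbb{R}_{\ge0}\times\mathbb{R}^d$ and $A^k:(\mathbb{R}^d)^k\to\mathbb{R}_{\ge0}\times\mathbb{R}^d$ ($k\ge1$) such that the first (time) component of $A^k(g^1,\dots,g^k)$ is at least that of $A^{k-1}(g^1,\dots,g^{k-1})$. Set $t^0=0$ and oracle state $s^0=(0,0,0)\in\mathbb{R}_{\ge0}\times\mathbb{R}^d\times\{0,1\}$. For $k=0,1,\dots$: $(t^{k+1},x^k)=A^k(g^1,\dots,g^k)$; draw $\xi^{k+1}=(\xi^{k+1}_1,\dots,\xi^{k+1}_n)\sim\mathcal{D}$ independently of the past; $(s^{k+1},g^{k+1})=O(t^{k+1},x^k,s^k,\xi^{k+1})$. $S_t=\{k\in\mathbb{N}_0:t^k\le t\}$. Zero-respecting: $\mathrm{supp}(x^k)\subseteq\bigcup_{j=1}^k\mathrm{supp}(g^j)$ for all $k$ and all realizations. Synchronized oracle: for a mapping $G$, $O^G_{\tau_1,\dots,\tau_n}(t,x,(s_t,s_x,s_q),(\xi_1,\dots,\xi_n))$ returns $((t,x,1),0)$ if $s_q=0$, and if $s_q=1$ returns $\big((0,0,0),\sum_{i\in[n]:\,s_t+\tau_i\le t}G(s_x;\xi_i)\big)$ (empty sum $=0$). *)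

theory Defs
  imports "HOL-Probability.Probability"
begin

text \<open>Vectors in R^T are modelled as real^'n with 'n a finite linearly ordered index
type, T = CARD('n); coordinate j has (1-based) position rank j.\<close>

definition rank :: "'n::{finite,linorder} \<Rightarrow> nat" where
  "rank j = card {i. i \<le> j}"

definition supp :: "real^'n \<Rightarrow> 'n set" where
  "supp x = {j. x $ j \<noteq> 0}"

definition prog :: "real^'n::{finite,linorder} \<Rightarrow> nat" where
  "prog x = Max (insert 0 (rank ` supp x))"

definition grad :: "(real^'n \<Rightarrow> real) \<Rightarrow> real^'n \<Rightarrow> real^'n" where
  "grad f x = (\<chi> j. frechet_derivative f (at x) (axis j 1))"

type_synonym 'n ostate = "real \<times> (real^'n) \<times> bool"

text \<open>Synchronized oracle O^G_{tau_1..tau_n}; the random draw is xi :: nat => bool,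
  xi i being the i-th component (i in 1..n); state component s_q is a bool (False = 0).\<close>
definition sync_oracle ::
  "(real^'n \<Rightarrow> bool \<Rightarrow> real^'n) \<Rightarrow> (nat \<Rightarrow> real) \<Rightarrow> nat \<Rightarrow>
   real \<Rightarrow> real^'n \<Rightarrow> 'n ostate \<Rightarrow> (nat \<Rightarrow> bool) \<Rightarrow> 'n ostate \<times> (real^'n)" where
  "sync_oracle G \<tau> n t x s \<xi> =
     (case s of (st, sx, sq) \<Rightarrow>
       if \<not> sq then ((t, x, True), 0)
       else ((0, 0, False), (\<Sum>i\<in>{i\<in>{1..n}. st + \<tau> i \<le> t}. G sx (\<xi> i))))"

text \<open>Algorithm: A gs = A^k(g^1,...,g^k) for gs = [g^1,...,g^k] (A [] = A^0).\<close>
definition is_algorithm :: "((real^'n) list \<Rightarrow> real \<times> (real^'n)) \<Rightarrow> bool" where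
  "is_algorithm A \<longleftrightarrow> (\<forall>gs. fst (A gs) \<ge> 0) \<and> (\<forall>gs g. fst (A gs) \<le> fst (A (gs @ [g])))"

text \<open>protocol_run A Orc xi k = ([g^1,...,g^k], s^k), with xi (k+1) the draw xi^{k+1}.\<close>
fun protocol_run ::
  "((real^'n) list \<Rightarrow> real \<times> (real^'n)) \<Rightarrow>
   (real \<Rightarrow> real^'n \<Rightarrow> 'n ostate \<Rightarrow> (nat \<Rightarrow> bool) \<Rightarrow> 'n ostate \<times> (real^'n)) \<Rightarrow>
   (nat \<Rightarrow> nat \<Rightarrow> bool) \<Rightarrow> nat \<Rightarrow> ((real^'n) list) \<times> 'n ostate" where
  "protocol_run A Orc \<xi> 0 = ([], (0, 0, False))"
| "protocol_run A Orc \<xi> (Suc k) =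
     (let (gs, s) = protocol_run A Orc \<xi> k;
          (t', x) = A gs;
          (s', g) = Orc t' x s (\<xi> (Suc k))
      in (gs @ [g], s'))"

definition iterate_x where
  "iterate_x A Orc \<xi> k = snd (A (fst (protocol_run A Orc \<xi> k)))"

definition iterate_t where
  "iterate_t A Orc \<xi> k = (if k = 0 then 0 else fst (A (fst (protocol_run A Orc \<xi> (k - 1)))))"

definition zero_respecting where
  "zero_respecting A Orc \<longleftrightarrow>
     (\<forall>\<xi> k. supp (iterate_x A Orc \<xi> k) \<subseteq> (\<Union>g\<in>set (fst (protocol_run A Orc \<xi> k)). supp g))"

definition G_bern :: "real \<Rightarrow> ((real,'n::{finite,linorder}) vec \<Rightarrow> real) \<Rightarrow> (real,'n) vec \<Rightarrow> bool \<Rightarrow> (real,'n) vec" where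
  "G_bern p f x \<xi> = (\<chi> j. grad f x $ j *
      (1 + (if rank j > prog x then (if \<xi> then 1 else 0) / p - 1 else 0)))"

definition draw_space :: "real \<Rightarrow> nat \<Rightarrow> (nat \<Rightarrow> nat \<Rightarrow> bool) measure" where
  "draw_space p n = PiM UNIV (\<lambda>k. PiM {1..n} (\<lambda>i. measure_pmf (bernoulli_pmf p)))"

end

theory Submission
  imports Defs
begin

text \<open>Call a synchronized round successful if some worker that finished within the round drew
  \<open>\<xi> = 1\<close>. A zero-respecting algorithm can make progress on a new coordinate only in a successful
  round, so \<open>prog (x\<^sup>k)\<close> is bounded by the number \<open>Q\<^sub>k\<close> of successful rounds before time \<open>t\<^sup>k\<close>.
  A round of duration \<open>\<Delta>\<close> in which the \<open>m\<close> fastest workers finish succeeds with probability at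
  most \<open>min 1 (p m) \<le> 2 \<Delta> / C\<close>, where \<open>C = min\<^sub>m \<tau>\<^sub>m (1 + 1/(4 p m))\<close>. Hence
  \<open>exp (Q\<^sub>k / 2 - 2 min (t\<^sup>k, t) / C)\<close> is a supermartingale, and Markov's inequality bounds the
  probability that \<open>Q\<close> ever reaches \<open>T\<close> by \<open>exp (2 t / C - T / 2) \<le> \<delta>\<close>.\<close>

section \<open>The time oracle protocol\<close>

lemma protocol_run_Suc:
  "protocol_run A Orc \<xi> (Suc k) =
    (let gs = fst (protocol_run A Orc \<xi> k);
         (s', g) = Orc (fst (A gs)) (snd (A gs)) (snd (protocol_run A Orc \<xi> k)) (\<xi> (Suc k))
     in (gs @ [g], s'))"
  by (simp add: split_def Let_def)

lemma protocol_run_cong: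
  "\<forall>j\<le>k. \<xi> j = \<xi>' j \<Longrightarrow> protocol_run A Orc \<xi> k = protocol_run A Orc \<xi>' k"
  by (induction k) (simp_all only: protocol_run_Suc, auto)

lemma iterate_t_Suc: "iterate_t A Orc \<xi> (Suc k) = fst (A (fst (protocol_run A Orc \<xi> k)))"
  by (simp add: iterate_t_def)

lemma iterate_t_le_Suc:
  assumes "is_algorithm A"
  shows "iterate_t A Orc \<xi> k \<le> iterate_t A Orc \<xi> (Suc k)"
proof (cases k)
  case 0
  then show ?thesis using assms by (simp add: iterate_t_def is_algorithm_def)
next
  case (Suc m)
  then show ?thesis using assms unfolding is_algorithm_def
    by (simp add: iterate_t_Suc protocol_run_Suc split_def Let_def del: protocol_run.simps)
qed

lemma protocol_run_sync_oracle_state: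
  "snd (protocol_run A (sync_oracle G \<tau> n) \<xi> k) =
    (if even k then (0, 0, False)
     else (iterate_t A (sync_oracle G \<tau> n) \<xi> k, iterate_x A (sync_oracle G \<tau> n) \<xi> (k - 1), True))"
  by (induction k)
    (auto simp: protocol_run_Suc split_def Let_def iterate_t_Suc iterate_x_def sync_oracle_def
          simp del: protocol_run.simps(2))

lemma protocol_run_sync_oracle_Suc:
  "fst (protocol_run A (sync_oracle G \<tau> n) \<xi> (Suc k)) =
    fst (protocol_run A (sync_oracle G \<tau> n) \<xi> k) @
     [if even k then 0 else
      (\<Sum>i\<in>{i\<in>{1..n}. iterate_t A (sync_oracle G \<tau> n) \<xi> k + \<tau> i
                                \<le> iterate_t A (sync_oracle G \<tau> n) \<xi> (Suc k)}.
          G (iterate_x A (sync_oracle G \<tau> n) \<xi> (k - 1)) (\<xi> (Suc k) i))]"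
  by (simp add: protocol_run_Suc split_def Let_def protocol_run_sync_oracle_state iterate_t_Suc
      sync_oracle_def del: protocol_run.simps)

section \<open>Progress\<close>

lemma rank_le_prog: "j \<in> supp x \<Longrightarrow> rank j \<le> prog x"
  unfolding prog_def by (intro Max_ge) auto

lemma prog_leI: "(\<And>j. j \<in> supp x \<Longrightarrow> rank j \<le> N) \<Longrightarrow> prog x \<le> N"
  unfolding prog_def by (intro Max.boundedI) auto

lemma supp_zero [simp]: "supp 0 = {}"
  by (simp add: supp_def)

lemma supp_sum_subset: "supp (sum v S) \<subseteq> (\<Union>i\<in>S. supp (v i))"
  unfolding supp_def by (auto intro: ccontr simp: sum.neutral)

lemma rank_supp_G_bern:
  assumes "prog (grad f x) \<le> prog x + 1" and "j \<in> supp (G_bern p f x b)"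
  shows "rank j \<le> prog x + (if b then 1 else 0)"
proof (rule ccontr)
  assume far: "\<not> ?thesis"
  have nz: "grad f x $ j * (1 + (if rank j > prog x then (if b then 1 else 0) / p - 1 else 0)) \<noteq> 0"
    using assms(2) by (simp add: supp_def G_bern_def)
  show False
  proof (cases "rank j > prog x + 1")
    case True
    have "j \<in> supp (grad f x)" using nz by (auto simp: supp_def)
    then show False using True assms(1) rank_le_prog[of j "grad f x"] by simp
  next
    case False
    then have "rank j = prog x + 1" "\<not> b" using far by (auto split: if_splits)
    then show False using nz by simp
  qed
qed

locale sync_run =
  fixes f :: "(real, 'n::{finite,linorder}) vec \<Rightarrow> real" and \<tau> :: "nat \<Rightarrow> real" and n :: nat
    and p :: real and A :: "(real, 'n) vec list \<Rightarrow> real \<times> (real, 'n) vec" and horizon :: real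
  assumes grad_prog: "\<forall>x. prog (grad f x) \<le> prog x + 1"
    and algorithm: "is_algorithm A"
    and zero_resp: "zero_respecting A (sync_oracle (G_bern p f) \<tau> n)"
begin

abbreviation "orc \<equiv> sync_oracle (G_bern p f) \<tau> n"
abbreviation "t_iter \<xi> k \<equiv> iterate_t A orc \<xi> k"
abbreviation "x_iter \<xi> k \<equiv> iterate_x A orc \<xi> k"

definition revealed :: "(nat \<Rightarrow> nat \<Rightarrow> bool) \<Rightarrow> nat \<Rightarrow> 'n set" where
  "revealed \<xi> k = (\<Union>g\<in>set (fst (protocol_run A orc \<xi> k)). supp g)"

text \<open>Odd steps \<open>k\<close> are the answering steps of the synchronized oracle; their answer depends
  on the draw \<open>\<xi> (Suc k)\<close>.\<close>

definition success :: "(nat \<Rightarrow> nat \<Rightarrow> bool) \<Rightarrow> nat \<Rightarrow> bool" where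
  "success \<xi> k \<longleftrightarrow> odd k \<and> t_iter \<xi> (Suc k) \<le> horizon \<and>
     (\<exists>i\<in>{1..n}. t_iter \<xi> k + \<tau> i \<le> t_iter \<xi> (Suc k) \<and> \<xi> (Suc k) i)"

primrec successes :: "(nat \<Rightarrow> nat \<Rightarrow> bool) \<Rightarrow> nat \<Rightarrow> nat" where
  "successes \<xi> 0 = 0"
| "successes \<xi> (Suc k) = successes \<xi> k + (if success \<xi> k then 1 else 0)"

lemma successes_mono: "k \<le> l \<Longrightarrow> successes \<xi> k \<le> successes \<xi> l"
  by (induction l rule: dec_induct) auto

lemma revealed_Suc:
  "revealed \<xi> (Suc k) = revealed \<xi> k \<union> supp (if even k then 0 else
    (\<Sum>i\<in>{i\<in>{1..n}. t_iter \<xi> k + \<tau> i \<le> t_iter \<xi> (Suc k)}. G_bern p f (x_iter \<xi> (k - 1)) (\<xi> (Suc k) i)))"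
  unfolding revealed_def by (simp only: protocol_run_sync_oracle_Suc) auto

lemma revealed_mono: "k \<le> l \<Longrightarrow> revealed \<xi> k \<subseteq> revealed \<xi> l"
  by (induction l rule: dec_induct) (auto simp: revealed_Suc)

lemma supp_x_iter: "supp (x_iter \<xi> k) \<subseteq> revealed \<xi> k"
  using zero_resp unfolding zero_respecting_def revealed_def by blast

lemma rank_revealed_le_successes:
  "t_iter \<xi> k \<le> horizon \<Longrightarrow> j \<in> revealed \<xi> k \<Longrightarrow> rank j \<le> successes \<xi> k"
proof (induction k arbitrary: j)
  case 0
  then show ?case by (simp add: revealed_def)
next
  case (Suc k)
  have in_time: "t_iter \<xi> k \<le> horizon"
    using Suc.prems(1) iterate_t_le_Suc[OF algorithm, of orc \<xi> k] by simp
  show ?case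
  proof (cases "j \<in> revealed \<xi> k")
    case True
    then show ?thesis using Suc.IH[OF in_time] by fastforce
  next
    case False
    then have "odd k" and "j \<in> supp (\<Sum>i\<in>{i\<in>{1..n}. t_iter \<xi> k + \<tau> i \<le> t_iter \<xi> (Suc k)}.
                                       G_bern p f (x_iter \<xi> (k - 1)) (\<xi> (Suc k) i))"
      using Suc.prems(2) by (auto simp: revealed_Suc split: if_splits)
    then obtain i where i: "i \<in> {1..n}" "t_iter \<xi> k + \<tau> i \<le> t_iter \<xi> (Suc k)"
      and ji: "j \<in> supp (G_bern p f (x_iter \<xi> (k - 1)) (\<xi> (Suc k) i))"
      using supp_sum_subset by blast
    have "prog (x_iter \<xi> (k - 1)) \<le> successes \<xi> k"
    proof (rule prog_leI)
      fix j' assume "j' \<in> supp (x_iter \<xi> (k - 1))"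
      then have "j' \<in> revealed \<xi> k" using supp_x_iter revealed_mono[of "k - 1" k \<xi>] by auto
      then show "rank j' \<le> successes \<xi> k" using Suc.IH[OF in_time] by blast
    qed
    moreover have "\<xi> (Suc k) i \<Longrightarrow> success \<xi> k"
      unfolding success_def using \<open>odd k\<close> i Suc.prems(1) by auto
    ultimately show ?thesis
      using rank_supp_G_bern[OF _ ji] grad_prog by (fastforce split: if_splits)
  qed
qed

lemma prog_x_iter_le_successes: "t_iter \<xi> k \<le> horizon \<Longrightarrow> prog (x_iter \<xi> k) \<le> successes \<xi> k"
  using rank_revealed_le_successes supp_x_iter by (intro prog_leI) blast

lemma t_iter_Suc_cong: "\<forall>j\<le>k. \<xi> j = \<xi>' j \<Longrightarrow> t_iter \<xi> (Suc k) = t_iter \<xi>' (Suc k)"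
  using protocol_run_cong[of k \<xi> \<xi>' A orc] by (simp add: iterate_t_Suc)

lemma t_iter_cong: "\<forall>j\<le>k. \<xi> j = \<xi>' j \<Longrightarrow> t_iter \<xi> k = t_iter \<xi>' k"
  by (cases k) (simp_all add: iterate_t_def t_iter_Suc_cong[simplified iterate_t_Suc])

lemma x_iter_cong: "\<forall>j\<le>k. \<xi> j = \<xi>' j \<Longrightarrow> x_iter \<xi> k = x_iter \<xi>' k"
  using protocol_run_cong[of k \<xi> \<xi>' A orc] by (simp add: iterate_x_def)

lemma successes_cong: "\<forall>j\<le>k. \<xi> j = \<xi>' j \<Longrightarrow> successes \<xi> k = successes \<xi>' k"
proof (induction k)
  case (Suc k)
  then have prefix: "\<forall>j\<le>k. \<xi> j = \<xi>' j" by auto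
  have "success \<xi> k = success \<xi>' k"
    unfolding success_def using t_iter_cong[OF prefix] t_iter_Suc_cong[OF prefix] Suc.prems by auto
  then show ?case using Suc.IH[OF prefix] by simp
qed simp

end

section \<open>Bernoulli draws\<close>

definition bernoulli_block :: "real \<Rightarrow> nat \<Rightarrow> (nat \<Rightarrow> bool) measure" where
  "bernoulli_block p n = PiM {1..n} (\<lambda>_. measure_pmf (bernoulli_pmf p))"

lemma draw_space_eq: "draw_space p n = PiM UNIV (\<lambda>_. bernoulli_block p n)"
  by (simp add: draw_space_def bernoulli_block_def)

lemma prob_space_bernoulli_block: "prob_space (bernoulli_block p n)"
  unfolding bernoulli_block_def by (intro prob_space_PiM) (simp add: prob_space_measure_pmf)

lemma product_prob_space_bernoulli_block: "product_prob_space (\<lambda>_. bernoulli_block p n)"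
  by (intro product_prob_space.intro product_sigma_finite.intro product_prob_space_axioms.intro
      prob_space_imp_sigma_finite prob_space_bernoulli_block)

lemma sets_PiM_countable_discrete:
  assumes "finite I" "\<And>i. sets (M i) = sets (count_space (B i))" "\<And>i. countable (B i)"
  shows "sets (PiM I M) = sets (count_space (PiE I B))"
  using sets_PiM_cong[of I I M "\<lambda>i. count_space (B i)"] count_space_PiM_finite[OF assms(1,3)] assms(2)
  by simp

lemma sets_bernoulli_block:
  "sets (bernoulli_block p n) = sets (count_space (PiE {1..n} (\<lambda>_. UNIV)))"
  unfolding bernoulli_block_def by (rule sets_PiM_countable_discrete) auto

lemma sets_PiM_bernoulli_block:
  "finite K \<Longrightarrow> sets (PiM K (\<lambda>_. bernoulli_block p n))
     = sets (count_space (PiE K (\<lambda>_. PiE {1..n} (\<lambda>_. UNIV))))"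
  by (rule sets_PiM_countable_discrete) (auto simp: sets_bernoulli_block countable_PiE)

lemma bernoulli_block_measurable_subset:
  "S \<subseteq> space (bernoulli_block p n) \<Longrightarrow> S \<in> sets (bernoulli_block p n)"
  using sets_eq_imp_space_eq[OF sets_bernoulli_block] by (simp add: sets_bernoulli_block)

lemma PiM_bernoulli_block_measurable_subset:
  "finite K \<Longrightarrow> S \<subseteq> space (PiM K (\<lambda>_. bernoulli_block p n)) \<Longrightarrow> S \<in> sets (PiM K (\<lambda>_. bernoulli_block p n))"
  using sets_eq_imp_space_eq[OF sets_PiM_bernoulli_block, of K p n] by (simp add: sets_PiM_bernoulli_block)

lemma bernoulli_block_measurable: "g \<in> borel_measurable (bernoulli_block p n)"
  by (simp add: measurable_cong_sets[OF sets_bernoulli_block refl] measurable_count_space_eq1)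

lemma PiM_bernoulli_block_measurable:
  "finite K \<Longrightarrow> g \<in> borel_measurable (PiM K (\<lambda>_. bernoulli_block p n))"
  by (simp add: measurable_cong_sets[OF sets_PiM_bernoulli_block refl] measurable_count_space_eq1)

lemma prob_bernoulli_block_coordinate:
  assumes "i \<in> {1..n}" "0 \<le> p" "p \<le> 1"
  shows "measure (bernoulli_block p n) {y \<in> space (bernoulli_block p n). y i} = p"
proof -
  interpret product_prob_space "\<lambda>_. measure_pmf (bernoulli_pmf p)" "{1..n}"
    by unfold_locales
  have "emeasure (bernoulli_block p n) {y \<in> space (bernoulli_block p n). y i \<in> {True}}
      = emeasure (measure_pmf (bernoulli_pmf p)) {True}"
    unfolding bernoulli_block_def using assms by (intro emeasure_PiM_Collect_single) auto
  then show ?thesis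
    using assms by (simp add: emeasure_pmf_single measure_def)
qed

lemma card_mem_if_downward_closed:
  assumes "finite S" "S \<noteq> {}" "0 \<notin> S" and closed: "\<And>i j. j \<in> S \<Longrightarrow> 1 \<le> i \<Longrightarrow> i \<le> j \<Longrightarrow> i \<in> S"
  shows "card S \<in> S"
proof -
  have "S \<subseteq> {1..Max S}"
    using assms(1,3) Max_ge by (fastforce simp: Suc_le_eq gr0I)
  moreover have "{1..Max S} \<subseteq> S"
    using closed Max_in[OF assms(1,2)] by auto
  ultimately have "S = {1..Max S}" by blast
  then show ?thesis using Max_in[OF assms(1,2)] by (metis card_atLeastAtMost diff_Suc_1)
qed

lemma monotone_chain_le:
  assumes "\<forall>i\<in>{1..<n}. \<tau> i \<le> \<tau> (Suc i)" "1 \<le> i" "i \<le> j" "j \<le> n"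
  shows "\<tau> i \<le> (\<tau> j :: real)"
  using assms(3,4)
proof (induction j rule: dec_induct)
  case (step j)
  then show ?case using assms(1,2) by (fastforce intro: order_trans)
qed simp

lemma min_one_le_rate: "(x::real) > 0 \<Longrightarrow> min 1 x \<le> 2 / (1 + 1 / (4 * x))"
proof -
  assume x: "x > 0"
  have "2 / (1 + 1 / (4 * x)) = 8 * x / (4 * x + 1)" using x by (simp add: field_simps)
  moreover have "min 1 x \<le> 8 * x / (4 * x + 1)"
    using x by (cases "x \<le> 1") (simp_all add: field_simps)
  ultimately show ?thesis by simp
qed

lemma prob_round_success_le:
  assumes p: "0 < p" "p \<le> 1" and mono: "\<forall>i\<in>{1..<n}. \<tau> i \<le> \<tau> (Suc i)" and "0 < \<tau> 1"
    and C: "0 < C" "\<forall>m\<in>{1..n}. C \<le> \<tau> m * (1 + 1 / (4 * p * real m))"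
    and "a \<le> b"
  shows "measure (bernoulli_block p n)
           {y \<in> space (bernoulli_block p n). \<exists>i\<in>{1..n}. a + \<tau> i \<le> b \<and> y i} \<le> 2 / C * (b - a)"
    (is "measure ?B ?E \<le> _")
proof -
  interpret B: prob_space ?B by (rule prob_space_bernoulli_block)
  define S where "S = {i\<in>{1..n}. a + \<tau> i \<le> b}"
  have E_eq: "?E = (\<Union>i\<in>S. {y \<in> space ?B. y i})" unfolding S_def by blast
  show ?thesis
  proof (cases "S = {}")
    case True
    then show ?thesis using C(1) \<open>a \<le> b\<close> by (simp only: E_eq) simp
  next
    case False
    define m where "m = card S"
    have "i \<in> S" if "j \<in> S" "1 \<le> i" "i \<le> j" for i j
      using that monotone_chain_le[OF mono, of i j] unfolding S_def by auto
    then have "m \<in> S"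
      unfolding m_def using False by (intro card_mem_if_downward_closed) (auto simp: S_def)
    then have m: "1 \<le> m" "m \<le> n" and round: "\<tau> m \<le> b - a" unfolding S_def by auto
    have \<tau>m: "0 < \<tau> m" using monotone_chain_le[OF mono, of 1 m] m \<open>0 < \<tau> 1\<close> by simp
    have "measure ?B ?E \<le> (\<Sum>i\<in>S. measure ?B {y \<in> space ?B. y i})"
      unfolding E_eq S_def
      by (intro B.finite_measure_subadditive_finite) (auto intro: bernoulli_block_measurable_subset)
    also have "\<dots> = p * m"
      using p by (simp add: m_def S_def prob_bernoulli_block_coordinate)
    finally have "measure ?B ?E \<le> min 1 (p * m)" by simp
    also have "\<dots> \<le> 2 / (1 + 1 / (4 * p * m))"
      using min_one_le_rate[of "p * m"] p m by (simp add: mult.assoc)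
    also have "\<dots> = 2 * \<tau> m / (\<tau> m * (1 + 1 / (4 * p * m)))"
      using \<tau>m by simp
    also have "\<dots> \<le> 2 * \<tau> m / C"
      using C m \<tau>m p by (intro divide_left_mono mult_pos_pos) (auto intro: add_pos_pos)
    also have "\<dots> \<le> 2 / C * (b - a)" using round C by (simp add: field_simps)
    finally show ?thesis .
  qed
qed

lemma prefix_event_eq_prod_emb:
  fixes K :: nat
  assumes "\<And>\<xi> \<xi>'. \<forall>j\<le>K. \<xi> j = \<xi>' j \<Longrightarrow> P \<xi> = P \<xi>'"
  shows "{\<xi> \<in> space (PiM UNIV M). P \<xi>} = prod_emb UNIV M {..K} {x \<in> space (PiM {..K} M). P x}"
proof -
  have "P (restrict \<xi> {..K}) = P \<xi>" for \<xi> by (rule assms) simp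
  then show ?thesis unfolding prod_emb_def space_PiM by auto
qed

lemma sets_prefix_event:
  fixes K :: nat
  assumes "\<And>\<xi> \<xi>'. \<forall>j\<le>K. \<xi> j = \<xi>' j \<Longrightarrow> P \<xi> = P \<xi>'"
  shows "{\<xi> \<in> space (PiM UNIV (\<lambda>_. bernoulli_block p n)). P \<xi>} \<in> sets (PiM UNIV (\<lambda>_. bernoulli_block p n))"
proof -
  have "{\<xi> \<in> space (PiM UNIV (\<lambda>_. bernoulli_block p n)). P \<xi>}
      = prod_emb UNIV (\<lambda>_. bernoulli_block p n) {..K}
          {x \<in> space (PiM {..K} (\<lambda>_. bernoulli_block p n)). P x}"
    by (rule prefix_event_eq_prod_emb) (rule assms)
  also have "\<dots> \<in> sets (PiM UNIV (\<lambda>_. bernoulli_block p n))"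
    by (rule measurable_prod_emb) (auto intro: PiM_bernoulli_block_measurable_subset)
  finally show ?thesis .
qed

lemma emeasure_prefix_event:
  fixes K :: nat
  assumes "\<And>\<xi> \<xi>'. \<forall>j\<le>K. \<xi> j = \<xi>' j \<Longrightarrow> P \<xi> = P \<xi>'"
  shows "emeasure (PiM UNIV (\<lambda>_. bernoulli_block p n)) {\<xi> \<in> space (PiM UNIV (\<lambda>_. bernoulli_block p n)). P \<xi>}
       = emeasure (PiM {..K} (\<lambda>_. bernoulli_block p n)) {x \<in> space (PiM {..K} (\<lambda>_. bernoulli_block p n)). P x}"
proof -
  interpret product_prob_space "\<lambda>_. bernoulli_block p n" UNIV
    by (rule product_prob_space_bernoulli_block)
  have "{\<xi> \<in> space (PiM UNIV (\<lambda>_. bernoulli_block p n)). P \<xi>}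
      = prod_emb UNIV (\<lambda>_. bernoulli_block p n) {..K}
          {x \<in> space (PiM {..K} (\<lambda>_. bernoulli_block p n)). P x}"
    by (rule prefix_event_eq_prod_emb) (rule assms)
  then show ?thesis
    by (simp only:) (intro emeasure_PiM_emb' PiM_bernoulli_block_measurable_subset, auto)
qed

section \<open>The potential\<close>

lemma (in prob_space) nn_integral_exp_half_indicator_le:
  assumes "E \<in> events" and "0 \<le> K"
  shows "(\<integral>\<^sup>+ y. ennreal K * ennreal (exp (indicator E y / 2)) \<partial>M) \<le> ennreal (K * (1 + prob E))"
proof -
  have "ennreal (exp (indicator E y / 2)) \<le> 1 + indicator E y" for y
    using exp_half_le2 by (cases "y \<in> E") (simp_all add: ennreal_leI[of _ 2, simplified] one_add_one)
  then have "(\<integral>\<^sup>+ y. ennreal (exp (indicator E y / 2)) \<partial>M) \<le> (\<integral>\<^sup>+ y. 1 + indicator E y \<partial>M)"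
    by (intro nn_integral_mono)
  also have "\<dots> = 1 + emeasure M E"
    using assms by (simp add: nn_integral_add emeasure_space_1)
  finally have "(\<integral>\<^sup>+ y. ennreal (exp (indicator E y / 2)) \<partial>M) \<le> ennreal (1 + prob E)"
    by (simp add: emeasure_eq_measure ennreal_plus[symmetric])
  then have "(\<integral>\<^sup>+ y. ennreal K * ennreal (exp (indicator E y / 2)) \<partial>M) \<le> ennreal K * ennreal (1 + prob E)"
    using assms(1) by (simp add: nn_integral_cmult mult_left_mono)
  also have "\<dots> = ennreal (K * (1 + prob E))"
    using assms(2) by (simp add: ennreal_mult)
  finally show ?thesis .
qed

locale sync_run_potential = sync_run +
  fixes C :: real
  assumes p: "0 < p" "p \<le> 1" and mono: "\<forall>i\<in>{1..<n}. \<tau> i \<le> \<tau> (Suc i)" and \<tau>1: "0 < \<tau> 1"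
    and C: "0 < C" "\<forall>m\<in>{1..n}. C \<le> \<tau> m * (1 + 1 / (4 * p * real m))"
    and horizon_nonneg: "0 \<le> horizon"
begin

definition potential :: "(nat \<Rightarrow> nat \<Rightarrow> bool) \<Rightarrow> nat \<Rightarrow> real" where
  "potential \<xi> k = exp (real (successes \<xi> k) / 2 - 2 / C * min (t_iter \<xi> k) horizon)"

lemma potential_fun_upd_Suc:
  "potential (\<xi>(Suc k := y)) (Suc k) = exp (real (successes \<xi> k) / 2
     + (if success (\<xi>(Suc k := y)) k then 1 / 2 else 0) - 2 / C * min (t_iter \<xi> (Suc k)) horizon)"
proof -
  have prefix: "\<forall>j\<le>k. (\<xi>(Suc k := y)) j = \<xi> j" by simp
  show ?thesis
    unfolding potential_def successes.simps t_iter_Suc_cong[OF prefix] successes_cong[OF prefix]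
    by (simp add: add_divide_distrib)
qed

lemma success_fun_upd_Suc:
  "success (\<xi>(Suc k := y)) k \<longleftrightarrow> odd k \<and> t_iter \<xi> (Suc k) \<le> horizon \<and>
     (\<exists>i\<in>{1..n}. t_iter \<xi> k + \<tau> i \<le> t_iter \<xi> (Suc k) \<and> y i)"
proof -
  have prefix: "\<forall>j\<le>k. (\<xi>(Suc k := y)) j = \<xi> j" by simp
  show ?thesis
    unfolding success_def t_iter_cong[OF prefix] t_iter_Suc_cong[OF prefix] by simp
qed

lemma nn_integral_potential_Suc_le:
  "(\<integral>\<^sup>+ y. ennreal (potential (\<xi>(Suc k := y)) (Suc k)) \<partial>bernoulli_block p n) \<le> ennreal (potential \<xi> k)"
proof -
  let ?B = "bernoulli_block p n"
  interpret B: prob_space ?B by (rule prob_space_bernoulli_block)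
  define a b c where "a = t_iter \<xi> k" and "b = t_iter \<xi> (Suc k)" and "c = successes \<xi> k"
  define E where "E = {y \<in> space ?B. \<exists>i\<in>{1..n}. a + \<tau> i \<le> b \<and> y i}"
  have "a \<le> b" unfolding a_def b_def by (rule iterate_t_le_Suc[OF algorithm])
  show ?thesis
  proof (cases "odd k \<and> b \<le> horizon")
    case True
    define K where "K = exp (real c / 2 - 2 / C * b)"
    have "potential (\<xi>(Suc k := y)) (Suc k) = K * exp (indicator E y / 2)" if "y \<in> space ?B" for y
      using True that unfolding potential_fun_upd_Suc success_fun_upd_Suc
      by (simp add: K_def E_def a_def b_def c_def exp_add[symmetric] indicator_def)
    then have "(\<integral>\<^sup>+ y. ennreal (potential (\<xi>(Suc k := y)) (Suc k)) \<partial>?B)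
        = (\<integral>\<^sup>+ y. ennreal K * ennreal (exp (indicator E y / 2)) \<partial>?B)"
      by (intro nn_integral_cong) (simp add: K_def ennreal_mult)
    also have "\<dots> \<le> ennreal (K * (1 + B.prob E))"
      unfolding E_def
      by (intro B.nn_integral_exp_half_indicator_le bernoulli_block_measurable_subset) (auto simp: K_def)
    also have "\<dots> \<le> ennreal (K * exp (2 / C * (b - a)))"
    proof -
      have "1 + B.prob E \<le> exp (2 / C * (b - a))"
        using prob_round_success_le[OF p mono \<tau>1 C \<open>a \<le> b\<close>] exp_ge_add_one_self[of "2 / C * (b - a)"]
        unfolding E_def by linarith
      then show ?thesis by (intro ennreal_leI mult_left_mono) (auto simp: K_def)
    qed
    also have "K * exp (2 / C * (b - a)) = potential \<xi> k"
    proof -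
      have "min a horizon = a" using True \<open>a \<le> b\<close> by simp
      then have "potential \<xi> k = exp (real c / 2 - 2 / C * a)"
        unfolding potential_def a_def c_def by simp
      moreover have "real c / 2 - 2 / C * b + 2 / C * (b - a) = real c / 2 - 2 / C * a"
        by (simp add: right_diff_distrib)
      ultimately show ?thesis
        unfolding K_def mult_exp_exp by simp
    qed
    finally show ?thesis .
  next
    case False
    then have "potential (\<xi>(Suc k := y)) (Suc k) = exp (real c / 2 - 2 / C * min b horizon)" for y
      unfolding potential_fun_upd_Suc success_fun_upd_Suc b_def c_def by auto
    moreover have "2 / C * min a horizon \<le> 2 / C * min b horizon"
      using \<open>a \<le> b\<close> C(1) by (intro mult_left_mono) auto
    then have "exp (real c / 2 - 2 / C * min b horizon) \<le> potential \<xi> k"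
      by (simp add: potential_def a_def c_def)
    ultimately show ?thesis by (simp add: B.emeasure_space_1 ennreal_leI)
  qed
qed

lemma nn_integral_potential_le_1:
  "(\<integral>\<^sup>+ \<xi>. ennreal (potential \<xi> k) \<partial>PiM {..k} (\<lambda>_. bernoulli_block p n)) \<le> 1"
proof (induction k)
  case 0
  interpret prob_space "PiM {0::nat} (\<lambda>_. bernoulli_block p n)"
    by (intro prob_space_PiM prob_space_bernoulli_block)
  have "potential \<xi> 0 = 1" for \<xi>
    unfolding potential_def using horizon_nonneg by (simp add: iterate_t_def)
  then show ?case by (simp add: emeasure_space_1)
next
  case (Suc k)
  interpret product_prob_space "\<lambda>_. bernoulli_block p n" UNIV
    by (rule product_prob_space_bernoulli_block)
  have "(\<integral>\<^sup>+ \<xi>. ennreal (potential \<xi> (Suc k)) \<partial>PiM {..Suc k} (\<lambda>_. bernoulli_block p n))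
      = (\<integral>\<^sup>+ \<xi>. (\<integral>\<^sup>+ y. ennreal (potential (\<xi>(Suc k := y)) (Suc k)) \<partial>bernoulli_block p n)
           \<partial>PiM {..k} (\<lambda>_. bernoulli_block p n))"
    unfolding atMost_Suc
    by (rule product_nn_integral_insert) (auto intro: PiM_bernoulli_block_measurable)
  also have "\<dots> \<le> (\<integral>\<^sup>+ \<xi>. ennreal (potential \<xi> k) \<partial>PiM {..k} (\<lambda>_. bernoulli_block p n))"
    by (intro nn_integral_mono nn_integral_potential_Suc_le)
  finally show ?case using Suc.IH by simp
qed

lemma emeasure_successes_ge_le:
  assumes "0 < \<delta>" and budget: "2 / C * horizon \<le> real T / 2 + ln \<delta>"
  shows "emeasure (PiM {..K} (\<lambda>_. bernoulli_block p n))
           {\<xi> \<in> space (PiM {..K} (\<lambda>_. bernoulli_block p n)). T \<le> successes \<xi> K} \<le> \<delta>"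
proof -
  let ?M = "PiM {..K} (\<lambda>_. bernoulli_block p n)"
  have "1 \<le> ennreal \<delta> * ennreal (potential \<xi> K)" if "T \<le> successes \<xi> K" for \<xi>
  proof -
    have "2 / C * min (t_iter \<xi> K) horizon \<le> 2 / C * horizon"
      using C(1) by (intro mult_left_mono) auto
    then have "- ln \<delta> \<le> real (successes \<xi> K) / 2 - 2 / C * min (t_iter \<xi> K) horizon"
      using budget that by linarith
    then have "exp (- ln \<delta>) \<le> potential \<xi> K" unfolding potential_def by simp
    then have "ennreal 1 \<le> ennreal (\<delta> * potential \<xi> K)"
      using \<open>0 < \<delta>\<close> by (intro ennreal_leI) (simp add: exp_minus field_simps)
    then show ?thesis
      using \<open>0 < \<delta>\<close> by (simp add: ennreal_mult potential_def)
  qed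
  then have "{\<xi> \<in> space ?M. T \<le> successes \<xi> K}
      \<subseteq> {\<xi> \<in> space ?M. 1 \<le> ennreal \<delta> * ennreal (potential \<xi> K)}"
    by blast
  then have "emeasure ?M {\<xi> \<in> space ?M. T \<le> successes \<xi> K}
      \<le> emeasure ?M {\<xi> \<in> space ?M. 1 \<le> ennreal \<delta> * ennreal (potential \<xi> K)}"
    by (intro emeasure_mono PiM_bernoulli_block_measurable_subset) auto
  also have "\<dots> \<le> ennreal \<delta> * (\<integral>\<^sup>+ \<xi>. ennreal (potential \<xi> K) * indicator (space ?M) \<xi> \<partial>?M)"
    by (intro nn_integral_Markov_inequality PiM_bernoulli_block_measurable) auto
  also have "\<dots> = ennreal \<delta> * (\<integral>\<^sup>+ \<xi>. ennreal (potential \<xi> K) \<partial>?M)"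
    by (intro arg_cong[where f = "(*) (ennreal \<delta>)"] nn_integral_cong) simp
  also have "\<dots> \<le> ennreal \<delta>"
    using mult_left_mono[OF nn_integral_potential_le_1, of "ennreal \<delta>" K] by simp
  finally show ?thesis .
qed

lemma sets_successes_ge:
  "{\<xi> \<in> space (PiM UNIV (\<lambda>_. bernoulli_block p n)). T \<le> successes \<xi> K}
     \<in> sets (PiM UNIV (\<lambda>_. bernoulli_block p n))"
  by (rule sets_prefix_event[where K = K]) (metis successes_cong)

lemma emeasure_successes_eventually_ge_le:
  assumes "0 < \<delta>" and budget: "2 / C * horizon \<le> real T / 2 + ln \<delta>"
  shows "emeasure (PiM UNIV (\<lambda>_. bernoulli_block p n))
           {\<xi> \<in> space (PiM UNIV (\<lambda>_. bernoulli_block p n)). \<exists>K. T \<le> successes \<xi> K} \<le> \<delta>"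
proof -
  let ?M = "PiM UNIV (\<lambda>_. bernoulli_block p n)"
  define reached where "reached K = {\<xi> \<in> space ?M. T \<le> successes \<xi> K}" for K
  have reached_sets: "reached K \<in> sets ?M" for K
    unfolding reached_def by (rule sets_successes_ge)
  have "incseq reached"
    unfolding incseq_def reached_def using successes_mono order_trans by blast
  have "{\<xi> \<in> space ?M. \<exists>K. T \<le> successes \<xi> K} = (\<Union>K. reached K)"
    unfolding reached_def by blast
  also have "emeasure ?M \<dots> = (SUP K. emeasure ?M (reached K))"
    using reached_sets \<open>incseq reached\<close> by (intro SUP_emeasure_incseq[symmetric]) auto
  also have "\<dots> \<le> \<delta>"
  proof (rule SUP_least)
    fix K
    have "emeasure ?M (reached K) = emeasure (PiM {..K} (\<lambda>_. bernoulli_block p n))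
        {\<xi> \<in> space (PiM {..K} (\<lambda>_. bernoulli_block p n)). T \<le> successes \<xi> K}"
      unfolding reached_def by (rule emeasure_prefix_event[where K = K]) (metis successes_cong)
    also have "\<dots> \<le> \<delta>" by (rule emeasure_successes_ge_le[OF assms])
    finally show "emeasure ?M (reached K) \<le> \<delta>" .
  qed
  finally show ?thesis .
qed

lemma prob_prog_below_dimension:
  assumes "0 < \<delta>" and budget: "2 / C * horizon \<le> real CARD('n) / 2 + ln \<delta>"
  shows "1 - \<delta> \<le> measure (PiM UNIV (\<lambda>_. bernoulli_block p n))
           {\<xi> \<in> space (PiM UNIV (\<lambda>_. bernoulli_block p n)).
              \<forall>k. t_iter \<xi> k \<le> horizon \<longrightarrow> prog (x_iter \<xi> k) < CARD('n)}"
    (is "_ \<le> measure ?M ?good")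
proof -
  interpret product_prob_space "\<lambda>_. bernoulli_block p n" UNIV
    by (rule product_prob_space_bernoulli_block)
  define reach where "reach = {\<xi> \<in> space ?M. \<exists>K. CARD('n) \<le> successes \<xi> K}"
  have "reach = (\<Union>K. {\<xi> \<in> space ?M. CARD('n) \<le> successes \<xi> K})"
    unfolding reach_def by blast
  then have reach_sets: "reach \<in> sets ?M" using sets_successes_ge by auto
  have "?good = (\<Inter>k. {\<xi> \<in> space ?M. t_iter \<xi> k \<le> horizon \<longrightarrow> prog (x_iter \<xi> k) < CARD('n)})"
    by auto
  moreover have "{\<xi> \<in> space ?M. t_iter \<xi> k \<le> horizon \<longrightarrow> prog (x_iter \<xi> k) < CARD('n)} \<in> sets ?M" for k
    by (rule sets_prefix_event[where K = k]) (metis t_iter_cong x_iter_cong)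
  ultimately have good_sets: "?good \<in> sets ?M" by auto
  have "space ?M - reach \<subseteq> ?good"
  proof (intro subsetI CollectI conjI allI impI)
    fix \<xi> assume "\<xi> \<in> space ?M - reach"
    then show "\<xi> \<in> space ?M" by blast
  next
    fix \<xi> k assume \<xi>: "\<xi> \<in> space ?M - reach" and "t_iter \<xi> k \<le> horizon"
    have "\<not> CARD('n) \<le> successes \<xi> k" using \<xi> unfolding reach_def by blast
    then show "prog (x_iter \<xi> k) < CARD('n)"
      using prog_x_iter_le_successes[OF \<open>t_iter \<xi> k \<le> horizon\<close>] by linarith
  qed
  then have "measure ?M (space ?M - reach) \<le> measure ?M ?good"
    using good_sets by (intro finite_measure_mono)
  moreover have "measure ?M reach \<le> \<delta>"
    using emeasure_successes_eventually_ge_le[OF assms] \<open>0 < \<delta>\<close>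
    unfolding reach_def by (simp add: emeasure_eq_measure)
  ultimately show ?thesis using reach_sets by (simp add: prob_compl)
qed

end

lemma rate_constant_exists:
  fixes c :: "nat \<Rightarrow> real" and n :: nat
  assumes "n \<ge> 1" and "\<forall>m\<in>{1..n}. 0 < c m"
    and "t \<le> 1/2 * Min ((\<lambda>m. c m * L) ` {1..n})"
  obtains C :: real where "0 < C" "\<forall>m\<in>{1..n}. C \<le> c m" "2 / C * t \<le> L"
proof
  define C where "C = Min (c ` {1..n})"
  have "C \<in> c ` {1..n}" unfolding C_def using assms(1) by (intro Min_in) auto
  then obtain m where m: "m \<in> {1..n}" "C = c m" by auto
  show "0 < C" using m assms(2) by simp
  show "\<forall>m\<in>{1..n}. C \<le> c m" unfolding C_def by (intro ballI Min_le) auto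
  have "Min ((\<lambda>m. c m * L) ` {1..n}) \<le> C * L" using m by (intro Min_le) auto
  then have "2 * t \<le> C * L" using assms(3) by linarith
  then show "2 / C * t \<le> L" using \<open>0 < C\<close> by (simp add: pos_divide_le_eq algebra_simps)
qed

theorem mainTheorem16:
  fixes f :: "(real,'n::{finite,linorder}) vec \<Rightarrow> real"
    and \<tau> :: "nat \<Rightarrow> real" and n :: nat and p \<delta> t :: real
    and A :: "((real,'n) vec) list \<Rightarrow> real \<times> ((real,'n) vec)"
  assumes "\<forall>x. f differentiable (at x)"
    and "\<forall>x. prog (grad f x) \<le> prog x + 1"
    and "n \<ge> 1" and "0 < \<tau> 1" and "\<forall>i\<in>{1..<n}. \<tau> i \<le> \<tau> (Suc i)"
    and "0 < p" and "p \<le> 1"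
    and "is_algorithm A"
    and "zero_respecting A (sync_oracle (G_bern p f) \<tau> n)"
    and "0 < \<delta>" and "\<delta> \<le> 1" and "0 \<le> t"
    and "t \<le> 1/2 * Min ((\<lambda>m. \<tau> m * (1 + 1 / (4 * p * real m)) *
                            (real CARD('n) / 2 + ln \<delta>)) ` {1..n})"
  shows "measure (draw_space p n)
           {\<xi> \<in> space (draw_space p n).
              \<forall>k. iterate_t A (sync_oracle (G_bern p f) \<tau> n) \<xi> k \<le> t \<longrightarrow>
                  prog (iterate_x A (sync_oracle (G_bern p f) \<tau> n) \<xi> k) < CARD('n)}
         \<ge> 1 - \<delta>"
proof -
  have "0 < \<tau> m" if "m \<in> {1..n}" for m
    using monotone_chain_le[OF assms(5), of 1 m] that assms(4) by simp
  then have "\<forall>m\<in>{1..n}. 0 < \<tau> m * (1 + 1 / (4 * p * real m))"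
    using assms(6) by (auto intro!: mult_pos_pos add_pos_pos)
  then obtain C where C: "0 < C" "\<forall>m\<in>{1..n}. C \<le> \<tau> m * (1 + 1 / (4 * p * real m))"
      and budget: "2 / C * t \<le> real CARD('n) / 2 + ln \<delta>"
    using rate_constant_exists[of n "\<lambda>m. \<tau> m * (1 + 1 / (4 * p * real m))" t
        "real CARD('n) / 2 + ln \<delta>"] assms(3,13) by blast
  interpret sync_run_potential f \<tau> n p A t C
    by unfold_locales (use assms C in auto)
  show ?thesis
    unfolding draw_space_eq by (rule prob_prog_below_dimension[OF \<open>0 < \<delta>\<close> budget])
qed

end
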